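(* Let $X_0,X_1,\dots,X_N$ be vectors in $\mathbf{R}^m$ such that (1) $X_0=0$; (2) for each $1\le t\le N$, $X_t$ and $X_{t-1}$ differ in exactly one coordinate, by $+1$ or $-1$; (3) for every $1\le i\le m$ there exists $t$ such that $X_t$ and $X_{t-1}$ differ in the $i$-th coordinate. Then there is a subset $X_{t_1},\dots,X_{t_m}$ of these vectors that forms a basis of $\mathbf{R}^m$. *)

theory Defs
  imports "HOL-Analysis.Analysis"
begin

end

theory Submission
  imports Defs
begin

text \<open>Each step \<open>X t - X (t - 1)\<close> is a nonzero multiple of a coordinate vector, and every
  coordinate direction occurs among the steps, so the span of the visited points contains all
  coordinate vectors and is the whole space. A maximal independent subset of the visited points
  is then a basis.\<close>

lemma diff_eq_axis_if_eq_off_coordinate: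
  fixes x y :: "'a::ab_group_add ^ 'n"
  assumes "\<And>j. j \<noteq> i \<Longrightarrow> y $ j = x $ j"
  shows "y - x = axis i (y $ i - x $ i)"
  using assms by (auto simp: vec_eq_iff axis_def)

lemma axis_in_span_if_differ_in_one_coordinate:
  fixes x y :: "real ^ 'n"
  assumes "x \<in> span S" "y \<in> span S"
    and "y $ i \<noteq> x $ i" and "\<And>j. j \<noteq> i \<Longrightarrow> y $ j = x $ j"
  shows "axis i 1 \<in> span S"
proof -
  let ?d = "y $ i - x $ i"
  have "axis i 1 = inverse ?d *\<^sub>R (y - x)"
    using assms(3) by (simp add: diff_eq_axis_if_eq_off_coordinate[OF assms(4)] vec_eq_iff axis_def)
  also have "\<dots> \<in> span S"
    using assms(1,2) by (intro span_scale span_diff)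
  finally show ?thesis .
qed

lemma span_eq_UNIV_if_axes_in_span:
  fixes S :: "(real ^ 'n) set"
  assumes "\<And>i. axis i 1 \<in> span S"
  shows "span S = UNIV"
proof -
  have "x \<in> span S" for x :: "real ^ 'n"
  proof -
    have "(\<Sum>i\<in>UNIV. x $ i *s axis i 1) \<in> span S"
      by (intro span_sum) (simp add: scalar_mult_eq_scaleR span_scale assms)
    then show ?thesis by (simp add: basis_expansion)
  qed
  then show ?thesis by blast
qed

lemma basis_subset_if_span_eq_UNIV:
  fixes S :: "'a::euclidean_space set"
  assumes "span S = UNIV"
  shows "\<exists>B. B \<subseteq> S \<and> independent B \<and> span B = UNIV \<and> card B = DIM('a)"
proof -
  obtain B where B: "B \<subseteq> S" "independent B" "S \<subseteq> span B"
    by (rule maximal_independent_subset)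
  have "span S \<subseteq> span B"
    using B(3) by (rule span_minimal[OF _ subspace_span])
  then have "span B = UNIV"
    using assms by blast
  moreover have "card B = DIM('a)"
    using dim_span_eq_card_independent[OF B(2)] \<open>span B = UNIV\<close> by simp
  ultimately show ?thesis using B(1,2) by blast
qed

theorem lemma4p1:
  fixes X :: "nat \<Rightarrow> real ^ 'm" and N :: nat
  assumes start: "X 0 = 0"
    and steps: "\<And>t. 1 \<le> t \<Longrightarrow> t \<le> N \<Longrightarrow>
        \<exists>i. (X t $ i - X (t - 1) $ i = 1 \<or> X t $ i - X (t - 1) $ i = -1) \<and>
            (\<forall>j. j \<noteq> i \<longrightarrow> X t $ j = X (t - 1) $ j)"
    and all_coords: "\<And>i. \<exists>t. 1 \<le> t \<and> t \<le> N \<and> X t $ i \<noteq> X (t - 1) $ i"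
  shows "\<exists>B. B \<subseteq> X ` {0..N} \<and> independent B \<and> span B = UNIV \<and> card B = CARD('m)"
proof -
  let ?S = "X ` {0..N}"
  have "axis i 1 \<in> span ?S" for i
  proof -
    obtain t where t: "1 \<le> t" "t \<le> N" "X t $ i \<noteq> X (t - 1) $ i"
      using all_coords by blast
    obtain k where k: "\<forall>j. j \<noteq> k \<longrightarrow> X t $ j = X (t - 1) $ j"
      using steps[OF t(1,2)] by blast
    with t(3) have "k = i" by metis
    with k t show ?thesis
      by (intro axis_in_span_if_differ_in_one_coordinate[of "X (t - 1)" _ "X t"]) (auto intro: span_base)
  qed
  then have "span ?S = UNIV"
    by (rule span_eq_UNIV_if_axes_in_span)
  from basis_subset_if_span_eq_UNIV[OF this] show ?thesis
    by simp
qed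

end
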